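(* Let ${\bf f}_1:\mathbb{R}^m\times\mathbb{R}_{\ge 0}\to\mathbb{R}^m$ and ${\bf f}_2:\mathbb{R}^m\times\mathbb{R}_{\ge 0}\to\mathbb{R}^m$ be continuously differentiable. Suppose both are contracting with identity metric, i.e. there is $\beta>0$ such that the symmetric parts of the Jacobians satisfy $\frac12\big(\frac{\partial {\bf f}_k}{\partial {\bf x}}+\frac{\partial {\bf f}_k}{\partial {\bf x}}^T\big)({\bf x},t)\le -\beta I$ for all ${\bf x},t$ and $k=1,2$; assume also that these Jacobians are uniformly bounded. Let ${\bf G}$ be a constant real $m\times p$ matrix, let $k_{12},k_{21}>0$ and let $T_{12},T_{21}\ge 0$ be constant delays. Consider the coupled delay system $$\dot{\bf x}_1(t)={\bf f}_1({\bf x}_1,t)+\tfrac{1}{k_{21}}{\bf G}{\bf G}^T\big({\bf x}_2(t-T_{21})-{\bf x}_1(t)\big),\qquad \dot{\bf x}_2(t)={\bf f}_2({\bf x}_2,t)+\tfrac{1}{k_{12}}{\bf G}{\bf G}^T\big({\bf x}_1(t-T_{12})-{\bf x}_2(t)\big),$$ with continuous initial functions on $[-\max(T_{12},T_{21}),0]$. Then the overall system is asymptotically contracting: for all values of the delays, any two solutions converge asymptotically to each other (all solutions converge to a single trajectory, independently of the initial conditions).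
   Context: A system is called asymptotically contracting if every virtual displacement (infinitesimal difference $\delta{\bf x}$ between neighboring solutions, $\delta{\bf x}=\frac{\partial {\bf x}}{\partial {\bf x}_o}d{\bf x}_o$ with respect to initial data) tends to zero as $t\to\infty$, which implies global asymptotic convergence of all solutions to a single trajectory. *)

theory Defs
  imports "HOL-Analysis.Analysis"
begin

definition sym_part :: "real^'m^'m \<Rightarrow> real^'m^'m" where
  "sym_part A = (1/2) *\<^sub>R (A + transpose A)"

definition C1_field ::
  "(real^'m \<Rightarrow> real \<Rightarrow> real^'m) \<Rightarrow> (real^'m \<Rightarrow> real \<Rightarrow> real^'m^'m)
     \<Rightarrow> (real^'m \<Rightarrow> real \<Rightarrow> real^'m) \<Rightarrow> bool" where
  "C1_field f J ft \<longleftrightarrow>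
     (\<forall>x t. t \<ge> 0 \<longrightarrow>
        ((\<lambda>z. f (fst z) (snd z)) has_derivative (\<lambda>(v, s). J x t *v v + s *\<^sub>R ft x t))
          (at (x, t) within UNIV \<times> {0..})) \<and>
     continuous_on (UNIV \<times> {0..}) (\<lambda>z. J (fst z) (snd z)) \<and>
     continuous_on (UNIV \<times> {0..}) (\<lambda>z. ft (fst z) (snd z))"

definition contracting_identity_metric ::
  "(real^'m \<Rightarrow> real \<Rightarrow> real^'m^'m) \<Rightarrow> real \<Rightarrow> bool" where
  "contracting_identity_metric J \<beta> \<longleftrightarrow>
     (\<forall>x t v. t \<ge> 0 \<longrightarrow> v \<bullet> (sym_part (J x t) *v v) \<le> - \<beta> * (v \<bullet> v))"

text \<open>A solution of the coupled delay system on [-max T12 T21, \<infinity>): continuous there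
  (its restriction to [-max T12 T21, 0] is the continuous initial function) and
  satisfying the delay ODE for all t \<ge> 0 (right derivative at t = 0).\<close>
definition coupled_solution ::
  "(real^'m \<Rightarrow> real \<Rightarrow> real^'m) \<Rightarrow> (real^'m \<Rightarrow> real \<Rightarrow> real^'m) \<Rightarrow> real^'p^'m
     \<Rightarrow> real \<Rightarrow> real \<Rightarrow> real \<Rightarrow> real \<Rightarrow> (real \<Rightarrow> real^'m) \<Rightarrow> (real \<Rightarrow> real^'m) \<Rightarrow> bool" where
  "coupled_solution f1 f2 G k12 k21 T12 T21 x1 x2 \<longleftrightarrow>
     continuous_on {- max T12 T21..} x1 \<and> continuous_on {- max T12 T21..} x2 \<and>
     (\<forall>t\<ge>0. (x1 has_vector_derivative
        (f1 (x1 t) t + (1 / k21) *\<^sub>R ((G ** transpose G) *v (x2 (t - T21) - x1 t))))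
        (at t within {0..})) \<and>
     (\<forall>t\<ge>0. (x2 has_vector_derivative
        (f2 (x2 t) t + (1 / k12) *\<^sub>R ((G ** transpose G) *v (x1 (t - T12) - x2 t))))
        (at t within {0..}))"

end

theory Submission
  imports Defs
begin

(* The differences e_i = x_i - y_i of two solutions obey the same delay-coupled system, with the
  fields replaced by d_i = f_i(x_i) - f_i(y_i); by the mean value theorem and the contraction
  hypothesis, d_i . e_i <= -beta |e_i|^2.  Along the errors, the Lyapunov-Krasovskii functional
    V = k21 |e1|^2 + k12 |e2|^2 + int_{t-T21}^t |G^T e2|^2 + int_{t-T12}^t |G^T e1|^2
  satisfies V' <= -2 beta (k21 |e1|^2 + k12 |e2|^2), since the integral terms turn the delayed
  coupling into -|G^T e1(t) - G^T e2(t - T21)|^2 - |G^T e2(t) - G^T e1(t - T12)|^2.  So V is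
  nonincreasing and the errors stay bounded; then the derivative of |e1|^2 + |e2|^2 is bounded
  above, and a Barbalat-type argument forces |e1|^2 + |e2|^2 -> 0. *)

lemma inner_double_le:
  fixes a b :: "'a::real_inner"
  shows "2 * (a \<bullet> b) \<le> a \<bullet> a + b \<bullet> b"
proof -
  have "0 \<le> (a - b) \<bullet> (a - b)" by simp
  then show ?thesis by (simp add: inner_diff_left inner_diff_right inner_commute)
qed

lemma inner_gram_matrix:
  fixes G :: "real^'p^'m"
  shows "x \<bullet> ((G ** transpose G) *v y) = (transpose G *v x) \<bullet> (transpose G *v y)"
  by (metis dot_lmul_matrix matrix_vector_mul_assoc transpose_matrix_vector)

lemma inner_coupled_velocity:
  fixes e d w :: "real^'m" and G :: "real^'p^'m"
  assumes "k \<noteq> 0"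
  shows "k * (e \<bullet> (d + (1 / k) *\<^sub>R ((G ** transpose G) *v (w - e)))) =
    k * (d \<bullet> e) + (transpose G *v e) \<bullet> (transpose G *v w) - (transpose G *v e) \<bullet> (transpose G *v e)"
  using assms
  by (simp add: inner_add_right inner_gram_matrix matrix_vector_mult_diff_distrib inner_diff_right
      inner_commute right_diff_distrib distrib_left)

lemma has_real_derivative_inner_self:
  fixes e :: "real \<Rightarrow> 'a::real_inner"
  assumes "(e has_vector_derivative D) (at t)"
  shows "((\<lambda>t. e t \<bullet> e t) has_real_derivative 2 * (e t \<bullet> D)) (at t)"
proof -
  have "(e has_derivative (\<lambda>h. h *\<^sub>R D)) (at t)"
    using assms unfolding has_vector_derivative_def .
  from has_derivative_inner[OF this this] show ?thesis
    by (simp add: has_field_derivative_def inner_commute algebra_simps mult_commute_abs)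
qed

lemma DERIV_le_imp_diff_le:
  fixes f f' :: "real \<Rightarrow> real"
  assumes "s \<le> t"
    and "\<And>x. s \<le> x \<Longrightarrow> x \<le> t \<Longrightarrow> (f has_real_derivative f' x) (at x)"
    and "\<And>x. s \<le> x \<Longrightarrow> x \<le> t \<Longrightarrow> f' x \<le> L"
  shows "f t - f s \<le> L * (t - s)"
proof -
  have "f t - L * t \<le> f s - L * s"
  proof (rule DERIV_nonpos_imp_nonincreasing[OF assms(1), of "\<lambda>x. f x - L * x"])
    fix x assume x: "s \<le> x" "x \<le> t"
    have "((\<lambda>x. f x - L * x) has_real_derivative f' x - L * 1) (at x)"
      by (intro DERIV_diff DERIV_cmult DERIV_ident assms(2) x)
    then show "\<exists>y. ((\<lambda>x. f x - L * x) has_real_derivative y) (at x) \<and> y \<le> 0"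
      using assms(3)[OF x] by auto
  qed
  then show ?thesis by (simp add: algebra_simps)
qed

lemma has_real_derivative_sliding_integral:
  fixes q :: "real \<Rightarrow> real"
  assumes q: "continuous_on {a..} q" and t: "a < t - T" and T: "0 \<le> T"
  shows "((\<lambda>s. integral {s - T..s} q) has_real_derivative q t - q (t - T)) (at t)"
proof -
  define P where "P s = integral {a..s} q" for s
  have P: "(P has_real_derivative q s) (at s)" if "a < s" for s
  proof -
    have "(P has_real_derivative q s) (at s within {a..s + 1})"
      unfolding P_def using that
      by (intro integral_has_real_derivative continuous_on_subset[OF q]) auto
    moreover have "at s within {a..s + 1} = at s"
      using that by (intro at_within_open_subset[of s "{a<..<s + 1}"]) auto
    ultimately show ?thesis by simp
  qed
  have "((\<lambda>s. P (s - T)) has_real_derivative q (t - T)) (at t)"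
  proof -
    have "((\<lambda>s. s - T) has_real_derivative 1) (at t)"
      using DERIV_diff[OF DERIV_ident DERIV_const] by simp
    then show ?thesis
      using DERIV_chain2[where f = P and g = "\<lambda>s. s - T"] P[OF t] by fastforce
  qed
  then have D: "((\<lambda>s. P s - P (s - T)) has_real_derivative q t - q (t - T)) (at t)"
    using t T by (intro DERIV_diff P) auto
  have eq: "P s - P (s - T) = integral {s - T..s} q" if "s \<in> {a + T<..}" for s
  proof -
    have "q integrable_on {a..s}"
      by (intro integrable_continuous_interval continuous_on_subset[OF q]) auto
    moreover have "a \<le> s - T" "s - T \<le> s"
      using that T by auto
    ultimately have "integral {a..s - T} q + integral {s - T..s} q = integral {a..s} q"
      by (intro Henstock_Kurzweil_Integration.integral_combine)
    then show ?thesis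
      unfolding P_def by linarith
  qed
  show ?thesis
    by (rule has_field_derivative_transform_within_open[OF D, where S = "{a + T<..}"])
      (use t eq in auto)
qed

lemma bounded_continuous_image_atLeast:
  fixes e :: "real \<Rightarrow> 'a::real_normed_vector"
  assumes "continuous_on {a..} e" and "\<And>t. t \<ge> b \<Longrightarrow> norm (e t) \<le> C"
  shows "bounded (e ` {a..})"
proof -
  have "continuous_on {a..b} e"
    using assms(1) by (rule continuous_on_subset) auto
  then have "bounded (e ` {a..b})"
    by (simp add: compact_imp_bounded compact_continuous_image)
  moreover have "bounded (e ` {b..})"
    unfolding bounded_iff using assms(2) by (intro exI[of _ C]) auto
  ultimately have "bounded (e ` ({a..b} \<union> {b..}))" by (simp add: image_Un)
  then show ?thesis by (rule bounded_subset) (intro image_mono, auto)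
qed

lemma Lyapunov_decay_imp_tendsto_zero:
  fixes V V' u u' :: "real \<Rightarrow> real"
  assumes V: "\<And>t. t > a \<Longrightarrow> (V has_real_derivative V' t) (at t)"
    and V'_le: "\<And>t. t > a \<Longrightarrow> V' t \<le> - c * u t"
    and V_nonneg: "\<And>t. t > a \<Longrightarrow> 0 \<le> V t"
    and u: "\<And>t. t > a \<Longrightarrow> (u has_real_derivative u' t) (at t)"
    and u'_le: "\<And>t. t > a \<Longrightarrow> u' t \<le> L"
    and u_nonneg: "\<And>t. t > a \<Longrightarrow> 0 \<le> u t"
    and c: "c > 0"
  shows "(u \<longlongrightarrow> 0) at_top"
  \<comment> \<open>V converges; if u b were large, the bound on u' would keep u large on [b - \<delta>, b],
    forcing a drop of V there that does not vanish as b \<rightarrow> \<infinity>.\<close>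
proof -
  have V'_nonpos: "V' t \<le> 0" if "t > a" for t
  proof -
    have "0 \<le> c * u t" using c u_nonneg[OF that] by simp
    then show ?thesis using V'_le[OF that] by linarith
  qed
  have V_antimono: "V t \<le> V s" if "a < s" "s \<le> t" for s t
  proof -
    have "V t - V s \<le> 0 * (t - s)"
      using that by (intro DERIV_le_imp_diff_le[where f' = V'] V V'_nonpos) auto
    then show ?thesis by simp
  qed
  define l where "l = Inf (V ` {a<..})"
  have bdd: "bdd_below (V ` {a<..})"
    using V_nonneg by (intro bdd_belowI2) auto
  have V_lim: "(V \<longlongrightarrow> l) at_top"
  proof (rule decreasing_tendsto)
    show "\<forall>\<^sub>F t in at_top. l \<le> V t"
      using eventually_gt_at_top[of a] by eventually_elim (simp add: l_def cInf_lower[OF _ bdd])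
  next
    fix x assume "l < x"
    then obtain s where s: "a < s" "V s < x"
      using cInf_less_iff[OF _ bdd] by (auto simp: l_def)
    show "\<forall>\<^sub>F t in at_top. V t < x"
      using eventually_ge_at_top[of s] by eventually_elim (meson V_antimono s order.strict_trans1)
  qed
  show ?thesis
  proof (rule tendstoI)
    fix \<epsilon> :: real assume "\<epsilon> > 0"
    define L' where "L' = max L 1"
    define \<delta> where "\<delta> = \<epsilon> / (2 * L')"
    have "L' \<ge> 1" by (simp add: L'_def)
    then have \<delta>: "\<delta> > 0" "\<delta> * L' = \<epsilon> / 2"
      using \<open>\<epsilon> > 0\<close> by (simp_all add: \<delta>_def)
    have "filterlim (\<lambda>b. b - \<delta>) at_top at_top"
      using filterlim_tendsto_add_at_top[OF tendsto_const[of "- \<delta>"] filterlim_ident] by simp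
    then have "((\<lambda>b. V (b - \<delta>) - V b) \<longlongrightarrow> l - l) at_top"
      by (intro tendsto_diff V_lim filterlim_compose[OF V_lim])
    moreover have "0 < c * \<delta> * (\<epsilon> / 2)"
      using c \<delta> \<open>\<epsilon> > 0\<close> by simp
    ultimately have "\<forall>\<^sub>F b in at_top. V (b - \<delta>) - V b < c * \<delta> * (\<epsilon> / 2)"
      using order_tendstoD(2) by fastforce
    moreover have "\<forall>\<^sub>F b in at_top. a < b - \<delta>"
      using eventually_gt_at_top[of "a + \<delta>"] by eventually_elim simp
    ultimately show "\<forall>\<^sub>F b in at_top. dist (u b) 0 < \<epsilon>"
    proof eventually_elim
      case (elim b)
      have u_lower: "u b - \<epsilon> / 2 \<le> u x" if x: "b - \<delta> \<le> x" "x \<le> b" for x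
      proof -
        have "u b - u x \<le> L' * (b - x)"
        proof (rule DERIV_le_imp_diff_le[OF x(2)])
          fix y assume "x \<le> y" "y \<le> b"
          then have "a < y" using elim x by linarith
          then show "(u has_real_derivative u' y) (at y)" "u' y \<le> L'"
            using u u'_le[of y] by (auto simp: L'_def)
        qed
        also have "\<dots> \<le> \<delta> * L'"
          using x \<open>L' \<ge> 1\<close> by (simp add: mult.commute)
        finally show ?thesis using \<delta> by linarith
      qed
      have "V b - V (b - \<delta>) \<le> - c * (u b - \<epsilon> / 2) * (b - (b - \<delta>))"
      proof (rule DERIV_le_imp_diff_le)
        fix x assume x: "b - \<delta> \<le> x" "x \<le> b"
        then have "a < x" using elim by linarith
        then show "(V has_real_derivative V' x) (at x)" by (rule V)
        have "V' x \<le> - c * u x" using V'_le \<open>a < x\<close> by blast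
        also have "\<dots> \<le> - c * (u b - \<epsilon> / 2)" using u_lower[OF x] c by simp
        finally show "V' x \<le> - c * (u b - \<epsilon> / 2)" .
      qed (use \<delta> in simp)
      then have "c * \<delta> * (u b - \<epsilon> / 2) < c * \<delta> * (\<epsilon> / 2)"
        using elim by (simp add: algebra_simps)
      then have "u b < \<epsilon>"
        using c \<delta> by (simp add: mult_less_cancel_left_pos)
      then show ?case
        using u_nonneg[of b] elim \<delta> by (simp add: dist_real_def)
    qed
  qed
qed

locale delay_coupled_errors =
  fixes e1 e2 d1 d2 :: "real \<Rightarrow> real^'m" and G :: "real^'p^'m"
    and \<beta> k12 k21 T12 T21 :: real
  assumes beta_pos: "\<beta> > 0" and k_pos: "k12 > 0" "k21 > 0"
    and T_nonneg: "T12 \<ge> 0" "T21 \<ge> 0"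
    and continuous_e1: "continuous_on {- max T12 T21..} e1"
    and continuous_e2: "continuous_on {- max T12 T21..} e2"
    and e1_derivative: "\<And>t. t > 0 \<Longrightarrow> (e1 has_vector_derivative
      d1 t + (1 / k21) *\<^sub>R ((G ** transpose G) *v (e2 (t - T21) - e1 t))) (at t)"
    and e2_derivative: "\<And>t. t > 0 \<Longrightarrow> (e2 has_vector_derivative
      d2 t + (1 / k12) *\<^sub>R ((G ** transpose G) *v (e1 (t - T12) - e2 t))) (at t)"
    and d1_dissipative: "\<And>t. t > 0 \<Longrightarrow> d1 t \<bullet> e1 t \<le> - \<beta> * (e1 t \<bullet> e1 t)"
    and d2_dissipative: "\<And>t. t > 0 \<Longrightarrow> d2 t \<bullet> e2 t \<le> - \<beta> * (e2 t \<bullet> e2 t)"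
begin

abbreviation velocity1 :: "real \<Rightarrow> real^'m" where
  "velocity1 t \<equiv> d1 t + (1 / k21) *\<^sub>R ((G ** transpose G) *v (e2 (t - T21) - e1 t))"

abbreviation velocity2 :: "real \<Rightarrow> real^'m" where
  "velocity2 t \<equiv> d2 t + (1 / k12) *\<^sub>R ((G ** transpose G) *v (e1 (t - T12) - e2 t))"

lemma delay_coupled_errors_swap: "delay_coupled_errors e2 e1 d2 d1 G \<beta> k21 k12 T21 T12"
  using delay_coupled_errors_axioms unfolding delay_coupled_errors_def by (simp add: max.commute)

definition output_energy :: "real^'m \<Rightarrow> real" where
  "output_energy v = (transpose G *v v) \<bullet> (transpose G *v v)"

definition krasovskii :: "real \<Rightarrow> real" where
  "krasovskii t = k21 * (e1 t \<bullet> e1 t) + k12 * (e2 t \<bullet> e2 t)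
     + integral {t - T21..t} (\<lambda>s. output_energy (e2 s))
     + integral {t - T12..t} (\<lambda>s. output_energy (e1 s))"

definition krasovskii_derivative :: "real \<Rightarrow> real" where
  "krasovskii_derivative t = k21 * (2 * (e1 t \<bullet> velocity1 t)) + k12 * (2 * (e2 t \<bullet> velocity2 t))
     + (output_energy (e2 t) - output_energy (e2 (t - T21)))
     + (output_energy (e1 t) - output_energy (e1 (t - T12)))"

lemma output_energy_nonneg: "0 \<le> output_energy v"
  by (simp add: output_energy_def)

lemma continuous_on_output_energy:
  assumes "continuous_on {- max T12 T21..} e"
  shows "continuous_on {- max T12 T21..} (\<lambda>s. output_energy (e s))"
  unfolding output_energy_def
  by (intro continuous_on_inner
      continuous_on_compose2[OF linear_continuous_on[OF matrix_vector_mul_bounded_linear] assms]) auto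

lemma has_real_derivative_krasovskii:
  assumes t: "t > 0"
  shows "(krasovskii has_real_derivative krasovskii_derivative t) (at t)"
proof -
  have "((\<lambda>t. integral {t - T21..t} (\<lambda>s. output_energy (e2 s))) has_real_derivative
      output_energy (e2 t) - output_energy (e2 (t - T21))) (at t)"
    by (rule has_real_derivative_sliding_integral[OF continuous_on_output_energy[OF continuous_e2]])
      (use t T_nonneg in auto)
  moreover have "((\<lambda>t. integral {t - T12..t} (\<lambda>s. output_energy (e1 s))) has_real_derivative
      output_energy (e1 t) - output_energy (e1 (t - T12))) (at t)"
    by (rule has_real_derivative_sliding_integral[OF continuous_on_output_energy[OF continuous_e1]])
      (use t T_nonneg in auto)
  ultimately show ?thesis
    unfolding krasovskii_def[abs_def] krasovskii_derivative_def
    by (intro DERIV_add DERIV_cmult has_real_derivative_inner_self e1_derivative e2_derivative t)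
qed

lemma krasovskii_derivative_le:
  assumes t: "t > 0"
  shows "krasovskii_derivative t \<le> - 2 * \<beta> * (k21 * (e1 t \<bullet> e1 t) + k12 * (e2 t \<bullet> e2 t))"
proof -
  define a where "a = transpose G *v e1 t"
  define b where "b = transpose G *v e2 (t - T21)"
  define c where "c = transpose G *v e2 t"
  define d where "d = transpose G *v e1 (t - T12)"
  have "krasovskii_derivative t = 2 * k21 * (d1 t \<bullet> e1 t) + 2 * k12 * (d2 t \<bullet> e2 t)
      + (2 * (a \<bullet> b) - a \<bullet> a - b \<bullet> b) + (2 * (c \<bullet> d) - c \<bullet> c - d \<bullet> d)"
    using inner_coupled_velocity[of k21 "e1 t" "d1 t" G "e2 (t - T21)"]
      inner_coupled_velocity[of k12 "e2 t" "d2 t" G "e1 (t - T12)"] k_pos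
    unfolding krasovskii_derivative_def output_energy_def a_def b_def c_def d_def by simp
  also have "\<dots> \<le> 2 * k21 * (d1 t \<bullet> e1 t) + 2 * k12 * (d2 t \<bullet> e2 t)"
    using inner_double_le[of a b] inner_double_le[of c d] by linarith
  also have "\<dots> \<le> 2 * k21 * (- \<beta> * (e1 t \<bullet> e1 t)) + 2 * k12 * (- \<beta> * (e2 t \<bullet> e2 t))"
    using d1_dissipative[OF t] d2_dissipative[OF t] k_pos by (intro add_mono mult_left_mono) auto
  finally show ?thesis by (simp add: algebra_simps)
qed

lemma krasovskii_derivative_nonpos:
  assumes "t > 0"
  shows "krasovskii_derivative t \<le> 0"
proof -
  have "0 \<le> 2 * \<beta> * (k21 * (e1 t \<bullet> e1 t) + k12 * (e2 t \<bullet> e2 t))"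
    using beta_pos k_pos by simp
  then show ?thesis
    using krasovskii_derivative_le[OF assms] by linarith
qed

lemma krasovskii_antimono:
  assumes "0 < s" "s \<le> t"
  shows "krasovskii t \<le> krasovskii s"
proof -
  have "krasovskii t - krasovskii s \<le> 0 * (t - s)"
    using assms
    by (intro DERIV_le_imp_diff_le[where f' = krasovskii_derivative] has_real_derivative_krasovskii
        krasovskii_derivative_nonpos) auto
  then show ?thesis by simp
qed

lemma weighted_errors_le_krasovskii:
  assumes t: "t > 0"
  shows "k21 * (e1 t \<bullet> e1 t) + k12 * (e2 t \<bullet> e2 t) \<le> krasovskii t"
proof -
  have "0 \<le> integral {t - T..t} (\<lambda>s. output_energy (e s))"
    if "continuous_on {- max T12 T21..} e" "T \<le> max T12 T21" for e T
  proof (rule integral_nonneg)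
    show "(\<lambda>s. output_energy (e s)) integrable_on {t - T..t}"
      using t that
      by (intro integrable_continuous_interval continuous_on_subset[OF continuous_on_output_energy]) auto
  qed (rule output_energy_nonneg)
  from this[OF continuous_e1, of T12] this[OF continuous_e2, of T21] show ?thesis
    unfolding krasovskii_def by simp
qed

lemma e1_bounded: "bounded (e1 ` {- max T12 T21..})"
proof (rule bounded_continuous_image_atLeast[OF continuous_e1])
  fix t :: real assume "1 \<le> t"
  moreover have "0 \<le> k12 * (e2 t \<bullet> e2 t)"
    using k_pos by simp
  ultimately have "k21 * (e1 t \<bullet> e1 t) \<le> krasovskii 1"
    using weighted_errors_le_krasovskii[of t] krasovskii_antimono[of 1 t] by simp
  then have "e1 t \<bullet> e1 t \<le> krasovskii 1 / k21"
    using k_pos by (simp add: pos_le_divide_eq mult.commute)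
  then show "norm (e1 t) \<le> sqrt (krasovskii 1 / k21)"
    unfolding norm_eq_sqrt_inner by (rule real_sqrt_le_mono)
qed

lemma e2_bounded: "bounded (e2 ` {- max T12 T21..})"
  using delay_coupled_errors.e1_bounded[OF delay_coupled_errors_swap] by (simp add: max.commute)

lemma output_energy_bounded:
  obtains B where "\<And>s. s \<ge> - max T12 T21 \<Longrightarrow>
    output_energy (e1 s) \<le> B \<and> output_energy (e2 s) \<le> B"
proof -
  have "bounded ((\<lambda>v. transpose G *v v) ` (e1 ` {- max T12 T21..} \<union> e2 ` {- max T12 T21..}))"
    by (rule bounded_linear_image[OF _ matrix_vector_mul_bounded_linear])
      (use e1_bounded e2_bounded in simp)
  then obtain C where C: "\<And>v. v \<in> e1 ` {- max T12 T21..} \<union> e2 ` {- max T12 T21..} \<Longrightarrow>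
      norm (transpose G *v v) \<le> C"
    unfolding bounded_iff by blast
  then have "output_energy (e1 s) \<le> C\<^sup>2 \<and> output_energy (e2 s) \<le> C\<^sup>2" if "s \<ge> - max T12 T21" for s
  proof -
    have "norm (transpose G *v e1 s) \<le> C" "norm (transpose G *v e2 s) \<le> C"
      using C that by auto
    then show ?thesis
      unfolding output_energy_def power2_norm_eq_inner[symmetric] by (simp add: power_mono)
  qed
  then show ?thesis by (rule that)
qed

lemma inner_velocity1_le:
  assumes "t > 0"
  shows "2 * (e1 t \<bullet> velocity1 t) \<le> output_energy (e2 (t - T21)) / k21"
proof -
  define a where "a = transpose G *v e1 t"
  define b where "b = transpose G *v e2 (t - T21)"
  have "k21 * (e1 t \<bullet> velocity1 t) = k21 * (d1 t \<bullet> e1 t) + a \<bullet> b - a \<bullet> a"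
    using inner_coupled_velocity[of k21 "e1 t" "d1 t" G "e2 (t - T21)"] k_pos by (simp add: a_def b_def)
  moreover have "k21 * (d1 t \<bullet> e1 t) \<le> 0"
  proof -
    have "0 \<le> \<beta> * (e1 t \<bullet> e1 t)"
      using beta_pos by simp
    then have "d1 t \<bullet> e1 t \<le> 0"
      using d1_dissipative[OF assms] by linarith
    then show ?thesis
      using k_pos by (simp add: mult_nonneg_nonpos)
  qed
  moreover have "2 * (a \<bullet> b) \<le> a \<bullet> a + b \<bullet> b" by (rule inner_double_le)
  moreover have "0 \<le> a \<bullet> a" by simp
  ultimately have "k21 * (2 * (e1 t \<bullet> velocity1 t)) \<le> output_energy (e2 (t - T21))"
    unfolding output_energy_def b_def[symmetric] by linarith
  then show ?thesis
    using k_pos by (simp add: field_simps)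
qed

lemma inner_velocity2_le:
  "t > 0 \<Longrightarrow> 2 * (e2 t \<bullet> velocity2 t) \<le> output_energy (e1 (t - T12)) / k12"
  using delay_coupled_errors.inner_velocity1_le[OF delay_coupled_errors_swap]
  by (simp add: delay_coupled_errors.output_energy_def[OF delay_coupled_errors_swap] output_energy_def)

lemma squared_errors_tendsto_zero: "((\<lambda>t. e1 t \<bullet> e1 t + e2 t \<bullet> e2 t) \<longlongrightarrow> 0) at_top"
proof -
  obtain B where B: "\<And>s. s \<ge> - max T12 T21 \<Longrightarrow>
      output_energy (e1 s) \<le> B \<and> output_energy (e2 s) \<le> B"
    using output_energy_bounded by blast
  have "2 * (e1 t \<bullet> velocity1 t) + 2 * (e2 t \<bullet> velocity2 t) \<le> B / k21 + B / k12" if "t > 0" for t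
  proof -
    have "output_energy (e2 (t - T21)) \<le> B" "output_energy (e1 (t - T12)) \<le> B"
      using B[of "t - T21"] B[of "t - T12"] that by auto
    then have "output_energy (e2 (t - T21)) / k21 \<le> B / k21"
      "output_energy (e1 (t - T12)) / k12 \<le> B / k12"
      using k_pos by (simp_all add: divide_right_mono)
    then show ?thesis
      using inner_velocity1_le[OF that] inner_velocity2_le[OF that] by linarith
  qed
  moreover have
    "krasovskii_derivative t \<le> - (2 * \<beta> * min k21 k12) * (e1 t \<bullet> e1 t + e2 t \<bullet> e2 t)"
    if "t > 0" for t
  proof -
    have "min k21 k12 * (e1 t \<bullet> e1 t + e2 t \<bullet> e2 t)
        \<le> k21 * (e1 t \<bullet> e1 t) + k12 * (e2 t \<bullet> e2 t)"
      by (simp add: distrib_left add_mono mult_right_mono)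
    then have "2 * \<beta> * (min k21 k12 * (e1 t \<bullet> e1 t + e2 t \<bullet> e2 t))
        \<le> 2 * \<beta> * (k21 * (e1 t \<bullet> e1 t) + k12 * (e2 t \<bullet> e2 t))"
      using beta_pos by (intro mult_left_mono) auto
    then show ?thesis
      using krasovskii_derivative_le[OF that] by (simp add: mult.assoc)
  qed
  moreover have "0 \<le> krasovskii t" if "t > 0" for t
  proof -
    have "0 \<le> k21 * (e1 t \<bullet> e1 t)" "0 \<le> k12 * (e2 t \<bullet> e2 t)"
      using k_pos by simp_all
    then show ?thesis
      using weighted_errors_le_krasovskii[OF that] by linarith
  qed
  ultimately show ?thesis
    using beta_pos k_pos
    by (intro Lyapunov_decay_imp_tendsto_zero[where a = 0 and c = "2 * \<beta> * min k21 k12"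
          and V = krasovskii and V' = krasovskii_derivative
          and u' = "\<lambda>t. 2 * (e1 t \<bullet> velocity1 t) + 2 * (e2 t \<bullet> velocity2 t)"]
        has_real_derivative_krasovskii DERIV_add has_real_derivative_inner_self
        e1_derivative e2_derivative)
      auto
qed

lemma error_norms_tendsto_zero: "((\<lambda>t. norm (e1 t) + norm (e2 t)) \<longlongrightarrow> 0) at_top"
proof (rule tendsto_sandwich[OF _ _ tendsto_const])
  show "((\<lambda>t. 2 * sqrt (e1 t \<bullet> e1 t + e2 t \<bullet> e2 t)) \<longlongrightarrow> 0) at_top"
    by (rule tendsto_mult_right_zero) (use tendsto_real_sqrt[OF squared_errors_tendsto_zero] in simp)
  have "norm (e1 t) + norm (e2 t) \<le> 2 * sqrt (e1 t \<bullet> e1 t + e2 t \<bullet> e2 t)" for t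
  proof -
    have "norm (e1 t) \<le> sqrt (e1 t \<bullet> e1 t + e2 t \<bullet> e2 t)"
      "norm (e2 t) \<le> sqrt (e1 t \<bullet> e1 t + e2 t \<bullet> e2 t)"
      unfolding norm_eq_sqrt_inner by (intro real_sqrt_le_mono, simp)+
    then show ?thesis by linarith
  qed
  then show "\<forall>\<^sub>F t in at_top. norm (e1 t) + norm (e2 t) \<le> 2 * sqrt (e1 t \<bullet> e1 t + e2 t \<bullet> e2 t)"
    by simp
qed simp

end

lemma quadratic_form_sym_part: "v \<bullet> (sym_part A *v v) = v \<bullet> (A *v v)"
proof -
  have "sym_part A *v v = (1 / 2) *\<^sub>R (A *v v + transpose A *v v)"
    by (metis scaleR_matrix_vector_assoc matrix_vector_mult_add_rdistrib sym_part_def)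
  moreover have "v \<bullet> (transpose A *v v) = v \<bullet> (A *v v)"
    by (metis dot_lmul_matrix inner_commute transpose_matrix_vector)
  ultimately show ?thesis
    by (simp only: inner_scaleR_right inner_add_right) simp
qed

lemma contracting_field_inner_diff_le:
  fixes f :: "real^'m \<Rightarrow> real \<Rightarrow> real^'m"
  assumes f: "C1_field f J ft" and J: "contracting_identity_metric J \<beta>" and t: "t \<ge> 0"
  shows "(f x t - f y t) \<bullet> (x - y) \<le> - \<beta> * ((x - y) \<bullet> (x - y))"
proof -
  define d where "d = x - y"
  define g where "g s = f (y + s *\<^sub>R d) t \<bullet> d" for s :: real
  have Df: "((\<lambda>z. f (fst z) (snd z)) has_derivative
      (\<lambda>(v, r). J (fst z) (snd z) *v v + r *\<^sub>R ft (fst z) (snd z))) (at z within UNIV \<times> {0..})"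
    if "z \<in> UNIV \<times> {0..}" for z
    using f that unfolding C1_field_def by auto
  have "(g has_real_derivative (J (y + s *\<^sub>R d) t *v d) \<bullet> d) (at s)" for s
  proof -
    have "((\<lambda>s. (y + s *\<^sub>R d, t)) has_derivative (\<lambda>h. (h *\<^sub>R d, 0))) (at s within UNIV)"
      by (auto intro!: derivative_eq_intros)
    from has_derivative_in_compose2[OF Df _ _ this]
    have "((\<lambda>s. f (y + s *\<^sub>R d) t) has_derivative (\<lambda>h. h *\<^sub>R (J (y + s *\<^sub>R d) t *v d))) (at s)"
      using t by (auto simp: matrix_vector_mult_scaleR)
    then have "((\<lambda>s. f (y + s *\<^sub>R d) t \<bullet> d) has_derivative
        (\<lambda>h. h *\<^sub>R (J (y + s *\<^sub>R d) t *v d) \<bullet> d)) (at s)"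
      by (auto intro!: derivative_eq_intros)
    then show ?thesis
      unfolding g_def has_field_derivative_def by (simp add: mult_commute_abs)
  qed
  then obtain z where "g 1 - g 0 = (J (y + z *\<^sub>R d) t *v d) \<bullet> d"
    using MVT2[of 0 1 g "\<lambda>s. (J (y + s *\<^sub>R d) t *v d) \<bullet> d"] by auto
  moreover have "(J (y + z *\<^sub>R d) t *v d) \<bullet> d \<le> - \<beta> * (d \<bullet> d)"
    using J t unfolding contracting_identity_metric_def
    by (metis quadratic_form_sym_part inner_commute)
  moreover have "g 1 - g 0 = (f x t - f y t) \<bullet> d"
    by (simp add: g_def d_def inner_diff_left)
  ultimately show ?thesis by (simp add: d_def)
qed

lemma coupled_solution_swap:
  "coupled_solution f1 f2 G k12 k21 T12 T21 x1 x2 \<longleftrightarrow> coupled_solution f2 f1 G k21 k12 T21 T12 x2 x1"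
  unfolding coupled_solution_def by (auto simp: max.commute)

lemma coupled_solution_difference_derivative:
  assumes x: "coupled_solution f1 f2 G k12 k21 T12 T21 x1 x2"
    and y: "coupled_solution f1 f2 G k12 k21 T12 T21 y1 y2" and t: "t > 0"
  shows "((\<lambda>t. x1 t - y1 t) has_vector_derivative (f1 (x1 t) t - f1 (y1 t) t) + (1 / k21) *\<^sub>R
      ((G ** transpose G) *v ((x2 (t - T21) - y2 (t - T21)) - (x1 t - y1 t)))) (at t)"
proof -
  have at_t: "at t within {0..} = at t"
    using t by (intro at_within_open_subset[of t "{0<..}"]) auto
  have "(x1 has_vector_derivative
        f1 (x1 t) t + (1 / k21) *\<^sub>R ((G ** transpose G) *v (x2 (t - T21) - x1 t))) (at t)"
      "(y1 has_vector_derivative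
        f1 (y1 t) t + (1 / k21) *\<^sub>R ((G ** transpose G) *v (y2 (t - T21) - y1 t))) (at t)"
    using x y t unfolding coupled_solution_def at_t[symmetric] by auto
  from has_vector_derivative_diff[OF this] show ?thesis
    by (simp add: matrix_vector_mult_diff_distrib algebra_simps)
qed

lemma coupled_solutions_delay_coupled_errors:
  assumes "C1_field f1 J1 ft1" "C1_field f2 J2 ft2"
    and "contracting_identity_metric J1 \<beta>" "contracting_identity_metric J2 \<beta>" "\<beta> > 0"
    and "k12 > 0" "k21 > 0" "T12 \<ge> 0" "T21 \<ge> 0"
    and x: "coupled_solution f1 f2 G k12 k21 T12 T21 x1 x2"
    and y: "coupled_solution f1 f2 G k12 k21 T12 T21 y1 y2"
  shows "delay_coupled_errors (\<lambda>t. x1 t - y1 t) (\<lambda>t. x2 t - y2 t)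
    (\<lambda>t. f1 (x1 t) t - f1 (y1 t) t) (\<lambda>t. f2 (x2 t) t - f2 (y2 t) t) G \<beta> k12 k21 T12 T21"
proof
  show "continuous_on {- max T12 T21..} (\<lambda>t. x1 t - y1 t)"
    "continuous_on {- max T12 T21..} (\<lambda>t. x2 t - y2 t)"
    using x y by (simp_all add: coupled_solution_def continuous_on_diff)
  show "((\<lambda>t. x1 t - y1 t) has_vector_derivative (f1 (x1 t) t - f1 (y1 t) t) + (1 / k21) *\<^sub>R
      ((G ** transpose G) *v ((x2 (t - T21) - y2 (t - T21)) - (x1 t - y1 t)))) (at t)" if "t > 0" for t
    using coupled_solution_difference_derivative[OF x y that] .
  show "((\<lambda>t. x2 t - y2 t) has_vector_derivative (f2 (x2 t) t - f2 (y2 t) t) + (1 / k12) *\<^sub>R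
      ((G ** transpose G) *v ((x1 (t - T12) - y1 (t - T12)) - (x2 t - y2 t)))) (at t)" if "t > 0" for t
    using coupled_solution_difference_derivative[OF
        coupled_solution_swap[THEN iffD1, OF x] coupled_solution_swap[THEN iffD1, OF y] that] .
  show "(f1 (x1 t) t - f1 (y1 t) t) \<bullet> (x1 t - y1 t) \<le> - \<beta> * ((x1 t - y1 t) \<bullet> (x1 t - y1 t))"
    "(f2 (x2 t) t - f2 (y2 t) t) \<bullet> (x2 t - y2 t) \<le> - \<beta> * ((x2 t - y2 t) \<bullet> (x2 t - y2 t))"
    if "t > 0" for t
    using contracting_field_inner_diff_le[OF assms(1,3)] contracting_field_inner_diff_le[OF assms(2,4)] that
    by simp_all
qed (use assms in simp_all)

theorem theorem1:
  fixes f1 f2 :: "real^'m \<Rightarrow> real \<Rightarrow> real^'m"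
    and J1 J2 :: "real^'m \<Rightarrow> real \<Rightarrow> real^'m^'m"
    and ft1 ft2 :: "real^'m \<Rightarrow> real \<Rightarrow> real^'m"
    and G :: "real^'p^'m"
    and \<beta> k12 k21 T12 T21 :: real
  assumes C1_1: "C1_field f1 J1 ft1"
    and C1_2: "C1_field f2 J2 ft2"
    and beta_pos: "\<beta> > 0"
    and contr1: "contracting_identity_metric J1 \<beta>"
    and contr2: "contracting_identity_metric J2 \<beta>"
    and bounded_J: "\<exists>B. \<forall>x t. t \<ge> 0 \<longrightarrow> norm (J1 x t) \<le> B \<and> norm (J2 x t) \<le> B"
    and k_pos: "k12 > 0" "k21 > 0"
    and T_nonneg: "T12 \<ge> 0" "T21 \<ge> 0"
    and sol_x: "coupled_solution f1 f2 G k12 k21 T12 T21 x1 x2"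
    and sol_y: "coupled_solution f1 f2 G k12 k21 T12 T21 y1 y2"
  shows "((\<lambda>t. norm (x1 t - y1 t) + norm (x2 t - y2 t)) \<longlongrightarrow> 0) at_top"
  using delay_coupled_errors.error_norms_tendsto_zero[OF coupled_solutions_delay_coupled_errors[OF
      C1_1 C1_2 contr1 contr2 beta_pos k_pos T_nonneg sol_x sol_y]] .

end
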